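(* Let $(S,\Delta,\mathbb{P})$ be a probability space, $(U,d)$ a separable metric space, $\mathfrak{X}$ the set of $U$-valued random variables on $S$, $\mathcal{I}$ an ideal on $\mathbb{N}$, and $\underline{X}=\{X_n\}$ a sequence in $\mathfrak{X}$. If $\mathfrak{B}$ is a totally bounded subset of $(\mathfrak{X}^0,\rho)$ such that $\{n\in\mathbb{N}:X_n\in\mathfrak{B}\}\notin\mathcal{I}$, then $\Gamma^{r^w}_{\underline{X}}(\mathcal{I}^{\mathbb{P}})\neq\varnothing$ for every $r>0$.
   Context: The Ky Fan metric is $\rho(X,Y)=\inf\{\varepsilon>0:\mathbb{P}(d(X,Y)>\varepsilon)\leq\varepsilon\}$; $\mathfrak{X}^0$ is the set of equivalence classes of $\mathfrak{X}$ under almost sure equality, on which $\rho$ is a metric. An ideal on $\mathbb{N}$ is a family $\mathcal{I}\subseteq\mathcal{P}(\mathbb{N})$ with $\varnothing\in\mathcal{I}$, closed under finite unions and under subsets. $\Gamma^{r^w}_{\underline{X}}(\mathcal{I}^{\mathbb{P}})$ (weak rough $\mathcal{I}$-cluster points in probability) is the set of $Y\in\mathfrak{X}$ for which there is $\delta_*=\delta_*(Y)>0$ with $\{n:\mathbb{P}(d(X_n,Y)<r+\varepsilon)>\delta_*\}\notin\mathcal{I}$ for every $\varepsilon>0$. *)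

theory Defs
  imports "HOL-Probability.Probability"
begin

definition nat_ideal :: "nat set set \<Rightarrow> bool" where
  "nat_ideal I \<longleftrightarrow> {} \<in> I \<and> (\<forall>A\<in>I. \<forall>B\<in>I. A \<union> B \<in> I) \<and> (\<forall>A\<in>I. \<forall>B. B \<subseteq> A \<longrightarrow> B \<in> I)"

definition rand_vars :: "'a measure \<Rightarrow> ('a \<Rightarrow> 'b::metric_space) set" where
  "rand_vars M = borel_measurable M"

text \<open>Ky Fan metric (a pseudometric on random variables; a metric on a.s.-classes).\<close>
definition ky_fan :: "'a measure \<Rightarrow> ('a \<Rightarrow> 'b::metric_space) \<Rightarrow> ('a \<Rightarrow> 'b) \<Rightarrow> real" where
  "ky_fan M X Y = Inf {e. e > 0 \<and> measure M {x \<in> space M. dist (X x) (Y x) > e} \<le> e}"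

text \<open>A set of random variables B, viewed as a subset of the space X^0 of a.s.-classes,
  is totally bounded w.r.t. the Ky Fan metric.\<close>
definition ky_fan_totally_bounded :: "'a measure \<Rightarrow> ('a \<Rightarrow> 'b::metric_space) set \<Rightarrow> bool" where
  "ky_fan_totally_bounded M B \<longleftrightarrow>
     (\<forall>e>0. \<exists>F. finite F \<and> F \<subseteq> B \<and> (\<forall>Y\<in>B. \<exists>Z\<in>F. ky_fan M Y Z < e))"

text \<open>The class of X lies in (the set of classes represented by) B.\<close>
definition class_in :: "'a measure \<Rightarrow> ('a \<Rightarrow> 'b) \<Rightarrow> ('a \<Rightarrow> 'b) set \<Rightarrow> bool" where
  "class_in M X B \<longleftrightarrow> (\<exists>Y\<in>B. AE x in M. X x = Y x)"

definition weak_rough_cluster_points ::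
  "'a measure \<Rightarrow> nat set set \<Rightarrow> real \<Rightarrow> (nat \<Rightarrow> 'a \<Rightarrow> 'b::metric_space) \<Rightarrow> ('a \<Rightarrow> 'b) set" where
  "weak_rough_cluster_points M I r X =
     {Y \<in> rand_vars M. \<exists>\<delta>>0. \<forall>e>0.
        {n. measure M {x \<in> space M. dist (X n x) (Y x) < r + e} > \<delta>} \<notin> I}"

end

theory Submission
  imports Defs
begin

text \<open>Cover the totally bounded set B by finitely many Ky Fan balls of radius
  e = min r (1/2) with centres in B. Since the indices n with X n in B are not in the ideal,
  the pigeonhole principle for ideals yields a centre Z such that the indices with
  ky_fan (X n) Z < e are not in the ideal. For those n, dist (X n) Z < r + \<epsilon> with
  probability above 1 - e \<ge> 1/2, so Z is a weak rough cluster point with \<delta> = 1/2.\<close>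

lemma nat_ideal_finite_UN:
  assumes "nat_ideal I" "finite F" "\<forall>Z\<in>F. g Z \<in> I"
  shows "(\<Union>Z\<in>F. g Z) \<in> I"
  using assms(2,3)
proof (induction F rule: finite_induct)
  case empty
  then show ?case using assms(1) by (simp add: nat_ideal_def)
next
  case (insert x F)
  then show ?case using assms(1) unfolding nat_ideal_def by auto
qed

lemma nat_ideal_not_in_mono:
  assumes "nat_ideal I" "A \<subseteq> B" "A \<notin> I"
  shows "B \<notin> I"
  using assms unfolding nat_ideal_def by blast

lemma nat_ideal_pigeonhole:
  assumes "nat_ideal I" "finite F" "A \<subseteq> (\<Union>Z\<in>F. g Z)" "A \<notin> I"
  shows "\<exists>Z\<in>F. g Z \<notin> I"
  using nat_ideal_finite_UN[OF assms(1,2)] nat_ideal_not_in_mono[OF assms(1,3,4)] by blast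

lemma ky_fan_AE_cong:
  fixes X Y Z :: "'a \<Rightarrow> 'b::{metric_space, second_countable_topology}"
  assumes "AE x in M. X x = Y x"
    and "X \<in> borel_measurable M" "Y \<in> borel_measurable M" "Z \<in> borel_measurable M"
  shows "ky_fan M X Z = ky_fan M Y Z"
proof -
  have "measure M {x \<in> space M. dist (X x) (Z x) > e} = measure M {x \<in> space M. dist (Y x) (Z x) > e}"
    for e :: real
    by (rule measure_eq_AE) (use assms in auto)
  then show ?thesis unfolding ky_fan_def by simp
qed

lemma (in prob_space) ky_fan_lessD:
  assumes "ky_fan M X Z < e"
  obtains e' where "0 < e'" "e' < e" "prob {x \<in> space M. dist (X x) (Z x) > e'} \<le> e'"
proof -
  let ?S = "{e. e > 0 \<and> prob {x \<in> space M. dist (X x) (Z x) > e} \<le> e}"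
  have "1 \<in> ?S" by simp \<comment> \<open>so the infimum in ky_fan is not the junk value of Inf {}\<close>
  then obtain e' where "e' \<in> ?S" "e' < e"
    using cInf_lessD[of ?S e] assms unfolding ky_fan_def by blast
  then show ?thesis using that by blast
qed

lemma (in prob_space) ky_fan_less_imp_prob_dist_less:
  fixes X Z :: "'a \<Rightarrow> 'b::{metric_space, second_countable_topology}"
  assumes "X \<in> borel_measurable M" "Z \<in> borel_measurable M"
    and "ky_fan M X Z < e" "e \<le> s"
  shows "1 - e < prob {x \<in> space M. dist (X x) (Z x) < s}"
proof -
  obtain e' where e': "0 < e'" "e' < e" "prob {x \<in> space M. dist (X x) (Z x) > e'} \<le> e'"
    using ky_fan_lessD[OF assms(3)] by blast
  let ?far = "{x \<in> space M. dist (X x) (Z x) > e'}"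
  have "?far \<in> events" using assms(1,2) by measurable
  have "1 - e' \<le> 1 - prob ?far" using e'(3) by simp
  also have "\<dots> = prob (space M - ?far)" using prob_compl[OF \<open>?far \<in> events\<close>] by simp
  also have "\<dots> \<le> prob {x \<in> space M. dist (X x) (Z x) < s}"
  proof (rule finite_measure_mono)
    show "space M - ?far \<subseteq> {x \<in> space M. dist (X x) (Z x) < s}"
      using e' assms(4) by auto
    show "{x \<in> space M. dist (X x) (Z x) < s} \<in> events"
      using assms(1,2) by measurable
  qed
  finally show ?thesis using e' by linarith
qed

lemma ky_fan_totally_bounded_finite_net:
  fixes B :: "('a \<Rightarrow> 'b::{metric_space, second_countable_topology}) set"
  assumes "ky_fan_totally_bounded M B" "B \<subseteq> borel_measurable M" "e > 0"
  obtains F where "finite F" "F \<subseteq> B"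
    "\<And>X. X \<in> borel_measurable M \<Longrightarrow> class_in M X B \<Longrightarrow> \<exists>Z\<in>F. ky_fan M X Z < e"
proof -
  obtain F where F: "finite F" "F \<subseteq> B" "\<forall>Y\<in>B. \<exists>Z\<in>F. ky_fan M Y Z < e"
    using assms(1,3) unfolding ky_fan_totally_bounded_def by meson
  have "\<exists>Z\<in>F. ky_fan M X Z < e" if "X \<in> borel_measurable M" "class_in M X B" for X
  proof -
    obtain Y where Y: "Y \<in> B" "AE x in M. X x = Y x"
      using \<open>class_in M X B\<close> by (auto simp: class_in_def)
    then obtain Z where Z: "Z \<in> F" "ky_fan M Y Z < e" using F(3) by blast
    have "ky_fan M X Z = ky_fan M Y Z"
      using ky_fan_AE_cong[OF Y(2) that(1)] Y(1) Z(1) F(2) assms(2) by blast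
    with Z(2) have "ky_fan M X Z < e" by simp
    with Z(1) show ?thesis by blast
  qed
  with F(1,2) that show ?thesis by blast
qed

lemma weak_rough_cluster_pointI:
  assumes "nat_ideal I" "Y \<in> rand_vars M" "\<delta> > 0" "A \<notin> I"
    and "\<And>\<epsilon>. \<epsilon> > 0 \<Longrightarrow> A \<subseteq> {n. measure M {x \<in> space M. dist (X n x) (Y x) < r + \<epsilon>} > \<delta>}"
  shows "Y \<in> weak_rough_cluster_points M I r X"
  using assms nat_ideal_not_in_mono[OF assms(1) _ assms(4)]
  unfolding weak_rough_cluster_points_def by blast

theorem proposition3p10:
  fixes M :: "'a measure"
    and X :: "nat \<Rightarrow> 'a \<Rightarrow> 'b::{metric_space, second_countable_topology}"
    and I :: "nat set set"
    and B :: "('a \<Rightarrow> 'b) set"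
  assumes "prob_space M"
    and "nat_ideal I"
    and "\<And>n. X n \<in> rand_vars M"
    and "B \<subseteq> rand_vars M"
    and "ky_fan_totally_bounded M B"
    and "{n. class_in M (X n) B} \<notin> I"
  shows "\<forall>r>0. weak_rough_cluster_points M I r X \<noteq> {}"
proof (intro allI impI)
  fix r :: real assume "r > 0"
  interpret prob_space M by fact
  define e where "e = min r (1/2)"
  have e: "0 < e" "e \<le> r" "e \<le> 1/2" using \<open>r > 0\<close> by (simp_all add: e_def)
  have X_rv: "\<And>n. X n \<in> borel_measurable M" and B_rv: "B \<subseteq> borel_measurable M"
    using assms(3,4) by (simp_all add: rand_vars_def)
  obtain F where F: "finite F" "F \<subseteq> B"
    "\<And>Y. Y \<in> borel_measurable M \<Longrightarrow> class_in M Y B \<Longrightarrow> \<exists>Z\<in>F. ky_fan M Y Z < e"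
    using ky_fan_totally_bounded_finite_net[OF assms(5) B_rv e(1)] by blast
  have "{n. class_in M (X n) B} \<subseteq> (\<Union>Z\<in>F. {n. ky_fan M (X n) Z < e})"
    using F(3)[OF X_rv] by blast
  then obtain Z where Z: "Z \<in> F" "{n. ky_fan M (X n) Z < e} \<notin> I"
    using nat_ideal_pigeonhole[OF assms(2) F(1)] assms(6) by blast
  have Z_rv: "Z \<in> rand_vars M" using Z(1) F(2) assms(4) by blast
  have "1/2 < prob {x \<in> space M. dist (X n x) (Z x) < r + \<epsilon>}"
    if "\<epsilon> > 0" "ky_fan M (X n) Z < e" for n \<epsilon>
  proof -
    have "1 - e < prob {x \<in> space M. dist (X n x) (Z x) < r + \<epsilon>}"
      using ky_fan_less_imp_prob_dist_less[OF X_rv Z_rv[unfolded rand_vars_def] that(2)] e(2) that(1)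
      by simp
    then show ?thesis using e(3) by linarith
  qed
  then have "Z \<in> weak_rough_cluster_points M I r X"
    by (intro weak_rough_cluster_pointI[OF assms(2) Z_rv _ Z(2), of "1/2"]) auto
  then show "weak_rough_cluster_points M I r X \<noteq> {}" by blast
qed

end
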